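(* Let $G$ be a non-discrete lcsc group and $M$ a local $G$-space. Then $\mathrm{vol}_M$ has no atoms.
   Context: An lcsc group is a locally compact second countable group; fix a Haar measure $\lambda$ on $G$. A local $G$-space is an lcsc space $M$ with a continuous map $\alpha:\mathrm{dom}(\alpha)\to M$, $\mathrm{dom}(\alpha)\subset G\times M$ open, written $g.p=\alpha(g,p)$, such that for all $p\in M$: (1) $(1_G,p)\in\mathrm{dom}(\alpha)$ and $1_G.p=p$; (2) if $(g,p)\in\mathrm{dom}(\alpha)$ then $(g^{-1},g.p)\in\mathrm{dom}(\alpha)$ and $g^{-1}.(g.p)=p$; (3) if $(h,p),(g,h.p),(gh,p)\in\mathrm{dom}(\alpha)$ then $gh.p=g.(h.p)$; (4) there is an open neighborhood $O_p$ of $1_G$ with $O_p\times\{p\}\subset\mathrm{dom}(\alpha)$ such that $g\mapsto g.p$ is a homeomorphism of $O_p$ onto an open neighborhood of $p$. A chart centered at $p$ is a homeomorphism $f_p$ from an open neighborhood of $p$ in $M$ onto an open neighborhood $\mathrm{rng}(f_p)$ of $1_G$ with $f_p(g.p)=g$ for all $g\in\mathrm{rng}(f_p)$. The canonical measure $\mathrm{vol}_M$ is the unique Radon measure on $M$ with $\mathrm{vol}_M(K)=\lambda(f_p(K))$ for every chart $f_p$ and Borel $K\subset\mathrm{dom}(f_p)$ (its existence and uniqueness is a known fact). *)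

theory Defs
  imports "HOL-Analysis.Analysis"
begin

text \<open>An lcsc group is a type 'g of class topological_group_add
(a topological group, written additively, NOT assumed commutative) which is
Hausdorff, second countable and locally compact. An lcsc space is a type of
class t2_space + second_countable_topology which is locally compact.\<close>

definition lcsc_space :: "'a::topological_space itself \<Rightarrow> bool" where
  "lcsc_space _ \<longleftrightarrow> locally_compact_space (euclidean :: 'a topology)"

definition radon_measure :: "'a::topological_space measure \<Rightarrow> bool" where
  "radon_measure \<mu> \<longleftrightarrow>
     sets \<mu> = sets borel \<and>
     (\<forall>K. compact K \<longrightarrow> emeasure \<mu> K < \<infinity>) \<and>
     (\<forall>A\<in>sets borel. emeasure \<mu> A = (INF U\<in>{U. open U \<and> A \<subseteq> U}. emeasure \<mu> U)) \<and>
     (\<forall>U. open U \<longrightarrow> emeasure \<mu> U = (SUP K\<in>{K. compact K \<and> K \<subseteq> U}. emeasure \<mu> K))"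

definition haar_measure :: "'g::topological_group_add measure \<Rightarrow> bool" where
  "haar_measure \<nu> \<longleftrightarrow> radon_measure \<nu> \<and> emeasure \<nu> UNIV \<noteq> 0 \<and>
     (\<forall>g A. A \<in> sets borel \<longrightarrow> emeasure \<nu> ((\<lambda>x. g + x) ` A) = emeasure \<nu> A)"

text \<open>Local G-space: partial action act defined on the open set D \<subseteq> G \<times> M;
g.p = act g p.  Group identity is 0, product g h is g + h, inverse is -g.\<close>
definition local_G_space :: "('g::topological_group_add \<times> 'm::topological_space) set
     \<Rightarrow> ('g \<Rightarrow> 'm \<Rightarrow> 'm) \<Rightarrow> bool" where
  "local_G_space D act \<longleftrightarrow>
     open D \<and> continuous_on D (\<lambda>(g, p). act g p) \<and>
     (\<forall>p. (0, p) \<in> D \<and> act 0 p = p) \<and>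
     (\<forall>g p. (g, p) \<in> D \<longrightarrow> (- g, act g p) \<in> D \<and> act (- g) (act g p) = p) \<and>
     (\<forall>g h p. (h, p) \<in> D \<and> (g, act h p) \<in> D \<and> (g + h, p) \<in> D
              \<longrightarrow> act (g + h) p = act g (act h p)) \<and>
     (\<forall>p. \<exists>W. open W \<and> 0 \<in> W \<and> W \<times> {p} \<subseteq> D \<and>
          (\<exists>V. open V \<and> p \<in> V \<and> (\<exists>h. homeomorphism W V (\<lambda>g. act g p) h)))"

definition chart_centered :: "('g::topological_group_add \<times> 'm::topological_space) set
     \<Rightarrow> ('g \<Rightarrow> 'm \<Rightarrow> 'm) \<Rightarrow> 'm \<Rightarrow> 'm set \<Rightarrow> ('m \<Rightarrow> 'g) \<Rightarrow> bool" where
  "chart_centered D act p U f \<longleftrightarrow>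
     open U \<and> p \<in> U \<and> open (f ` U) \<and> 0 \<in> f ` U \<and>
     (\<exists>h. homeomorphism U (f ` U) f h) \<and>
     (\<forall>g\<in>f ` U. (g, p) \<in> D \<and> act g p \<in> U \<and> f (act g p) = g)"

definition canonical_measure :: "'g::topological_group_add measure
     \<Rightarrow> ('g \<times> 'm::topological_space) set \<Rightarrow> ('g \<Rightarrow> 'm \<Rightarrow> 'm) \<Rightarrow> 'm measure \<Rightarrow> bool" where
  "canonical_measure \<nu> D act vol \<longleftrightarrow> radon_measure vol \<and>
     (\<forall>p U f K. chart_centered D act p U f \<and> K \<in> sets borel \<and> K \<subseteq> U
        \<longrightarrow> emeasure vol K = emeasure \<nu> (f ` K))"

end

theory Submission
  imports Defs
begin

text \<open>Inverting the orbit map \<open>g \<mapsto> g.p\<close> gives a chart centered at \<open>p\<close>, so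
\<open>vol\<^sub>M {p}\<close> is the Haar measure of a single point of \<open>G\<close>. By translation
invariance all points of \<open>G\<close> have the same Haar measure. As \<open>G\<close> is not discrete,
a compact neighbourhood of the identity contains infinitely many points, and its Haar
measure is finite; hence this common value is \<open>0\<close>.\<close>

lemma ennreal_eq_0_if_multiples_bounded:
  fixes c B :: ennreal
  assumes bound: "\<And>n::nat. of_nat n * c \<le> B" and "B < \<infinity>"
  shows "c = 0"
proof (rule ccontr)
  assume "c \<noteq> 0"
  have "c < \<infinity>"
    using bound[of 1] \<open>B < \<infinity>\<close> by auto
  then have "B / c < \<infinity>"
    using \<open>B < \<infinity>\<close> \<open>c \<noteq> 0\<close>
    by (metis ennreal_divide_eq_top_iff infinity_ennreal_def top.not_eq_extremum)
  then obtain n :: nat where "B / c < of_nat n"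
    using ennreal_Ex_less_of_nat by auto
  then have "B < of_nat n * c"
    using divide_less_ennreal \<open>c \<noteq> 0\<close> \<open>c < \<infinity>\<close> by simp
  with bound[of n] show False by simp
qed

lemma emeasure_equal_singletons_eq_0:
  assumes "infinite S" "S \<subseteq> K" "K \<in> sets M" "emeasure M K < \<infinity>"
    and S_sets: "\<And>x. x \<in> S \<Longrightarrow> {x} \<in> sets M"
    and S_measure: "\<And>x. x \<in> S \<Longrightarrow> emeasure M {x} = c"
  shows "c = 0"
proof (rule ennreal_eq_0_if_multiples_bounded)
  show "of_nat n * c \<le> emeasure M K" for n
  proof -
    obtain F where F: "F \<subseteq> S" "finite F" "card F = n"
      using infinite_arbitrarily_large[OF \<open>infinite S\<close>] by blast
    have "of_nat n * c = (\<Sum>x\<in>F. emeasure M {x})"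
      using F S_measure by (simp add: subset_iff)
    also have "\<dots> = emeasure M F"
      using F S_sets by (auto intro: emeasure_eq_sum_singleton[symmetric])
    also have "\<dots> \<le> emeasure M K"
      using F assms(2,3) by (intro emeasure_mono) auto
    finally show ?thesis .
  qed
qed (fact assms(4))

lemma open_singleton_translate:
  fixes a x :: "'g::topological_group_add"
  assumes "open {a}"
  shows "open {x}"
proof -
  have "(a + - x) + y = a \<longleftrightarrow> y = x" for y
    by (metis add.assoc add_left_cancel add.right_neutral minus_add_cancel add.left_inverse)
  then have "(\<lambda>y. (a + - x) + y) -` {a} = {x}"
    by auto
  moreover have "open ((\<lambda>y. (a + - x) + y) -` {a})"
    using assms by (intro continuous_open_vimage continuous_intros)
  ultimately show ?thesis
    by simp
qed

lemma infinite_if_open_not_discrete: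
  fixes U :: "'g::{topological_group_add, t1_space} set"
  assumes "open U" "a \<in> U" and not_discrete: "\<not> (\<forall>x::'g. open {x})"
  shows "infinite U"
proof
  assume "finite U"
  then have "open (U - (U - {a}))"
    using assms(1) by (intro open_Diff finite_imp_closed) auto
  moreover have "U - (U - {a}) = {a}"
    using assms(2) by auto
  ultimately have "open {a}"
    by simp
  with not_discrete show False
    using open_singleton_translate by blast
qed

lemma haar_measure_singleton:
  fixes \<nu> :: "'g::{topological_group_add, t1_space} measure"
  assumes "haar_measure \<nu>"
  shows "emeasure \<nu> {x} = emeasure \<nu> {0}"
proof -
  have "\<forall>g A. A \<in> sets borel \<longrightarrow> emeasure \<nu> ((\<lambda>y. g + y) ` A) = emeasure \<nu> A"
    using assms unfolding haar_measure_def by (elim conjE)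
  moreover have "{0::'g} \<in> sets borel"
    by simp
  ultimately have "emeasure \<nu> ((\<lambda>y. x + y) ` {0}) = emeasure \<nu> {0}"
    by blast
  then show ?thesis
    by simp
qed

lemma haar_measure_singleton_eq_0:
  fixes \<nu> :: "'g::{topological_group_add, t2_space} measure"
  assumes "lcsc_space TYPE('g)" and "\<not> (\<forall>x::'g. open {x})" and "haar_measure \<nu>"
  shows "emeasure \<nu> {x} = 0"
proof -
  have "\<exists>U K. open U \<and> compact K \<and> (0::'g) \<in> U \<and> U \<subseteq> K"
    using assms(1) unfolding lcsc_space_def locally_compact_space_def by simp
  then obtain U K where UK: "open U" "(0::'g) \<in> U" "U \<subseteq> K" "compact K"
    by blast
  have radon: "radon_measure \<nu>"
    using assms(3) unfolding haar_measure_def by simp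
  have "emeasure \<nu> {x} = emeasure \<nu> {0}"
    using assms(3) by (rule haar_measure_singleton)
  also have "\<dots> = 0"
  proof (rule emeasure_equal_singletons_eq_0)
    show "infinite U"
      using UK(1,2) assms(2) by (rule infinite_if_open_not_discrete)
    have sets_\<nu>: "sets \<nu> = sets borel"
      using radon unfolding radon_measure_def by simp
    show "K \<in> sets \<nu>"
      using UK(4) by (simp add: sets_\<nu> compact_imp_closed)
    show "emeasure \<nu> K < \<infinity>"
      using radon UK(4) unfolding radon_measure_def by simp
    show "{y} \<in> sets \<nu>" for y
      by (simp add: sets_\<nu>)
    show "emeasure \<nu> {y} = emeasure \<nu> {0}" for y
      using assms(3) by (rule haar_measure_singleton)
  qed (fact UK(3))
  finally show ?thesis .
qed

lemma chart_centered_inverse_orbit_map: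
  assumes "open W" "0 \<in> W" "W \<times> {p} \<subseteq> D" "open V" "p \<in> V"
    and orbit: "homeomorphism W V (\<lambda>g. act g p) h"
  shows "chart_centered D act p V h"
  unfolding chart_centered_def
proof (intro conjI)
  show "open V" "p \<in> V"
    by (fact assms(4,5))+
  have "h ` V = W"
    using orbit by (simp add: homeomorphism_def)
  then show "open (h ` V)" "0 \<in> h ` V"
    using assms(1,2) by auto
  show "\<exists>k. homeomorphism V (h ` V) h k"
    using homeomorphism_symD[OF orbit] \<open>h ` V = W\<close> by auto
  show "\<forall>g\<in>h ` V. (g, p) \<in> D \<and> act g p \<in> V \<and> h (act g p) = g"
    using assms(3) orbit unfolding homeomorphism_def by auto
qed

theorem lemma6p11:
  fixes \<nu> :: "'g::{topological_group_add, t2_space, second_countable_topology} measure"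
    and D :: "('g \<times> 'm::{t2_space, second_countable_topology}) set"
    and act :: "'g \<Rightarrow> 'm \<Rightarrow> 'm"
    and vol :: "'m measure"
  assumes "lcsc_space TYPE('g)"
    and "lcsc_space TYPE('m)"
    and "\<not> (\<forall>x::'g. open {x})"
    and "haar_measure \<nu>"
    and "local_G_space D act"
    and "canonical_measure \<nu> D act vol"
  shows "\<forall>p. emeasure vol {p} = 0"
proof
  fix p :: 'm
  obtain W V h where "open W" "0 \<in> W" "W \<times> {p} \<subseteq> D" "open V" "p \<in> V"
      and "homeomorphism W V (\<lambda>g. act g p) h"
    using assms(5) unfolding local_G_space_def by meson
  then have "chart_centered D act p V h"
    by (rule chart_centered_inverse_orbit_map)
  moreover have "{p} \<in> sets borel" "{p} \<subseteq> V"
    using \<open>p \<in> V\<close> by auto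
  ultimately have "emeasure vol {p} = emeasure \<nu> (h ` {p})"
    using assms(6) unfolding canonical_measure_def by blast
  also have "\<dots> = 0"
    using assms(1,3,4) by (simp add: haar_measure_singleton_eq_0)
  finally show "emeasure vol {p} = 0" .
qed

end
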